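(* Let $f:[0,\infty)\to[0,\infty)$ be continuously differentiable with $f>0$ on $[t_0,\infty)$ for some $t_0\ge0$ and $f\in C^2([t_0,\infty))$, let $g=\log f$ on $[t_0,\infty)$, assume condition (H1) of the context with the pair $(q,p)$, and set $F(t)=\int_0^t f(s)\,ds$. Then $$\limsup_{t\to\infty}\left(\frac{F(t)\log F(t)}{f(t)}\right)'\le\frac1p,$$ where $1/\infty=0$.
   Context: Condition (H1): (i) $g'(t)>0$ and $g''(t)>0$ for all $t\ge t_0$, and there is a pair $(q,p)$ with either $q=1$ and $p\in(0,\infty]$, or $q\in(1,\infty)$ and $p\in(0,\infty)$, such that $\lim_{t\to\infty}\frac{g'(t)^2}{g(t)g''(t)}=q$ and $\lim_{t\to\infty}\frac{tg'(t)}{g(t)}=p$; (ii) if $q=1$, then $tg'(t)/g(t)$ is nondecreasing on $[t_0,\infty)$ and there exist $k\in\mathbb{N}$ and $\hat g\in C^2([t_0,\infty))$ with $f=\exp_k\circ\hat g$ and $\hat g'/\hat g$ nonincreasing on $[t_0,\infty)$ ($\exp_1=\exp$, $\exp_k=\exp_{k-1}\circ\exp$). *)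

theory Defs
  imports "HOL-Analysis.Analysis"
begin

definition exp_iter :: "nat \<Rightarrow> real \<Rightarrow> real" where
  "exp_iter k = (exp ^^ k)"

end

theory Submission
  imports Defs "HOL-Real_Asymp.Real_Asymp"
begin

text \<open>
  Write \<open>f = exp G\<close> with \<open>G' = g1 > 0\<close>, \<open>G'' = g2 > 0\<close>, and let \<open>\<rho> = 1/q\<close> be the limit
  of \<open>G g2 / g1\<^sup>2\<close>. For \<open>E = F ln F / f\<close> one has \<open>E' = 1 - ln F (F g1 - f) / f\<close>.
  Since \<open>F - f / g1\<close> is nondecreasing, \<open>F \<ge> f / g1 - A\<close>; comparing the derivatives of
  \<open>F g1 - f\<close> and \<open>c f / G - A g1\<close> then gives \<open>F g1 - f \<ge> c f / G - O(g1 + 1)\<close> for every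
  \<open>c < \<rho>\<close>. Moreover \<open>ln g1 = o(G)\<close>, so \<open>ln F \<sim> G\<close> and \<open>G g1 / f \<longrightarrow> 0\<close>; hence
  \<open>E' \<le> 1 - c + o(1)\<close> and \<open>limsup E' \<le> 1 - 1/q\<close>.
  Finally \<open>1 - 1/q \<le> 1/p\<close>: the elasticity \<open>w = t g1 / G\<close> satisfies
  \<open>(ln w)' = (1 - w (1 - G g2 / g1\<^sup>2)) / t\<close>, so \<open>p (1 - 1/q) > 1\<close> would force
  \<open>ln w \<longrightarrow> -\<infinity>\<close> although \<open>w \<longrightarrow> p\<close>.
\<close>

lemma DERIV_le_imp_eventually_le_add_const:
  fixes h k h' k' :: "real \<Rightarrow> real"
  assumes "eventually (\<lambda>x. (h has_real_derivative h' x) (at x)) at_top"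
    and "eventually (\<lambda>x. (k has_real_derivative k' x) (at x)) at_top"
    and "eventually (\<lambda>x. h' x \<le> k' x) at_top"
  shows "\<exists>C. eventually (\<lambda>x. h x \<le> k x + C) at_top"
proof -
  obtain T where T: "\<And>x. x \<ge> T \<Longrightarrow> (h has_real_derivative h' x) (at x) \<and>
      (k has_real_derivative k' x) (at x) \<and> h' x \<le> k' x"
    using eventually_conj[OF assms(1) eventually_conj[OF assms(2,3)]]
    unfolding eventually_at_top_linorder by blast
  have "h x \<le> k x + (h T - k T)" if "T \<le> x" for x
  proof -
    have "(\<lambda>x. h x - k x) x \<le> (\<lambda>x. h x - k x) T"
      using T by (intro DERIV_nonpos_imp_nonincreasing[OF that])
        (auto intro!: exI[of _ "h' _ - k' _"] DERIV_diff)
    then show ?thesis by simp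
  qed
  then have "eventually (\<lambda>x. h x \<le> k x + (h T - k T)) at_top"
    unfolding eventually_at_top_linorder by blast
  then show ?thesis by blast
qed

lemma has_real_derivative_at_within_Ici:
  assumes "(f has_real_derivative D) (at x within {a..})" "a < x"
  shows "(f has_real_derivative D) (at x)"
  using assms at_within_interior[of x "{a..}"] by simp

lemma integral_has_real_derivative_Ici:
  fixes f :: "real \<Rightarrow> real"
  assumes "continuous_on {a..} f" "a < x"
  shows "((\<lambda>s. integral {a..s} f) has_real_derivative f x) (at x)"
proof -
  have "((\<lambda>s. integral {a..s} f) has_real_derivative f x) (at x within {a..x + 1})"
    using assms by (intro integral_has_real_derivative continuous_on_subset[OF assms(1)]) auto
  then show ?thesis using at_within_Icc_at[of a x "x + 1"] assms(2) by simp
qed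

text \<open>\<open>G\<close> is the function \<open>g = log f\<close> of (H1), \<open>g1 = g'\<close>, \<open>g2 = g''\<close>, and \<open>\<rho> = 1/q\<close>.\<close>

locale log_convex_increasing =
  fixes t0 \<rho> :: real and f F G g1 g2 :: "real \<Rightarrow> real"
  assumes F_deriv: "x > t0 \<Longrightarrow> (F has_real_derivative f x) (at x)"
    and f_eq_exp: "x > t0 \<Longrightarrow> f x = exp (G x)"
    and G_deriv: "x > t0 \<Longrightarrow> (G has_real_derivative g1 x) (at x)"
    and g1_deriv: "x > t0 \<Longrightarrow> (g1 has_real_derivative g2 x) (at x)"
    and g1_pos: "x > t0 \<Longrightarrow> g1 x > 0"
    and g2_pos: "x > t0 \<Longrightarrow> g2 x > 0"
    and ratio_tendsto: "((\<lambda>x. G x * g2 x / (g1 x)\<^sup>2) \<longlongrightarrow> \<rho>) at_top"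
begin

lemma f_pos: "x > t0 \<Longrightarrow> f x > 0"
  by (simp add: f_eq_exp)

lemma f_deriv:
  assumes "x > t0"
  shows "(f has_real_derivative f x * g1 x) (at x)"
proof -
  have "((\<lambda>x. exp (G x)) has_real_derivative f x * g1 x) (at x)"
    using DERIV_fun_exp[OF G_deriv[OF assms]] by (simp add: f_eq_exp[OF assms])
  then show ?thesis
    by (rule has_field_derivative_transform_within_open[where S = "{t0<..}"])
      (use assms in \<open>auto simp: f_eq_exp\<close>)
qed

lemma g1_mono:
  assumes "t0 < x" "x \<le> y"
  shows "g1 x \<le> g1 y"
  using assms by (intro DERIV_nonneg_imp_nondecreasing[OF assms(2)])
    (auto intro!: exI[of _ "g2 _"] g1_deriv less_imp_le[OF g2_pos])

lemma linear_le_G: "\<exists>c>0. \<exists>C. eventually (\<lambda>x. c * x \<le> G x + C) at_top"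
proof -
  define c where "c = g1 (t0 + 1)"
  have "\<exists>C. eventually (\<lambda>x. c * x \<le> G x + C) at_top"
  proof (rule DERIV_le_imp_eventually_le_add_const)
    show "eventually (\<lambda>x. ((\<lambda>x. c * x) has_real_derivative c) (at x)) at_top"
      by (auto intro!: derivative_eq_intros)
    show "eventually (\<lambda>x. (G has_real_derivative g1 x) (at x)) at_top"
      using eventually_gt_at_top[of t0] by (rule eventually_mono) (rule G_deriv)
    show "eventually (\<lambda>x. c \<le> g1 x) at_top"
      using eventually_ge_at_top[of "t0 + 1"] by (rule eventually_mono) (simp add: c_def g1_mono)
  qed
  moreover have "c > 0" by (simp add: c_def g1_pos)
  ultimately show ?thesis by blast
qed

lemma G_at_top: "filterlim G at_top at_top"
proof -
  obtain c C where "c > 0" and le: "eventually (\<lambda>x. c * x \<le> G x + C) at_top"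
    using linear_le_G by blast
  have "filterlim (\<lambda>x. c * x - C) at_top at_top"
    using \<open>c > 0\<close> by real_asymp
  then show ?thesis
    by (rule filterlim_at_top_mono) (use le in \<open>auto elim: eventually_mono\<close>)
qed

lemma x_le_G: "\<exists>N>0. eventually (\<lambda>x. x \<le> N * G x) at_top"
proof -
  obtain c C where c: "c > 0" and le: "eventually (\<lambda>x. c * x \<le> G x + C) at_top"
    using linear_le_G by blast
  have "eventually (\<lambda>x. \<bar>C\<bar> \<le> G x) at_top"
    using G_at_top by (simp add: filterlim_at_top)
  with le have "eventually (\<lambda>x. x \<le> (2 / c) * G x) at_top"
    by eventually_elim (use c in \<open>simp add: field_simps\<close>)
  then show ?thesis using c by (intro exI[of _ "2 / c"]) auto
qed

lemma eventually_G_gt: "eventually (\<lambda>x. G x > Z) at_top"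
  using G_at_top by (simp add: filterlim_at_top_dense)

lemma ln_g1_le_ln_G: "\<exists>K. eventually (\<lambda>x. ln (g1 x) \<le> (\<rho> + 1) * ln (G x) + K) at_top"
proof (rule DERIV_le_imp_eventually_le_add_const)
  show "eventually (\<lambda>x. ((\<lambda>x. ln (g1 x)) has_real_derivative g2 x / g1 x) (at x)) at_top"
    using eventually_gt_at_top[of t0] by eventually_elim
      (auto intro!: derivative_eq_intros g1_deriv simp: g1_pos field_simps)
  show "eventually (\<lambda>x. ((\<lambda>x. (\<rho> + 1) * ln (G x)) has_real_derivative
      (\<rho> + 1) * (g1 x / G x)) (at x)) at_top"
    using eventually_gt_at_top[of t0] eventually_G_gt[of 0] by eventually_elim
      (auto intro!: derivative_eq_intros G_deriv simp: field_simps)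
  show "eventually (\<lambda>x. g2 x / g1 x \<le> (\<rho> + 1) * (g1 x / G x)) at_top"
    using eventually_gt_at_top[of t0] eventually_G_gt[of 0] order_tendstoD(2)[OF ratio_tendsto less_add_one]
  proof eventually_elim
    case (elim x)
    then have "G x * g2 x \<le> (\<rho> + 1) * (g1 x)\<^sup>2"
      using g1_pos[of x] by (simp add: field_simps)
    then show ?case
      using elim g1_pos[of x] by (simp add: field_simps power2_eq_square)
  qed
qed

lemma ln_g1_over_G_tendsto_0: "((\<lambda>x. ln (g1 x) / G x) \<longlongrightarrow> 0) at_top"
proof -
  define m where "m = ln (g1 (t0 + 1))"
  obtain K where K: "eventually (\<lambda>x. ln (g1 x) \<le> (\<rho> + 1) * ln (G x) + K) at_top"
    using ln_g1_le_ln_G by blast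
  show ?thesis
  proof (rule tendsto_sandwich[of "\<lambda>x. m / G x" _ _ "\<lambda>x. ((\<rho> + 1) * ln (G x) + K) / G x"])
    have "((\<lambda>y. m / y) \<longlongrightarrow> 0) at_top" "((\<lambda>y. ((\<rho> + 1) * ln y + K) / y) \<longlongrightarrow> 0) at_top"
      by real_asymp+
    then show "((\<lambda>x. m / G x) \<longlongrightarrow> 0) at_top"
      "((\<lambda>x. ((\<rho> + 1) * ln (G x) + K) / G x) \<longlongrightarrow> 0) at_top"
      by (auto intro: filterlim_compose[OF _ G_at_top])
    show "eventually (\<lambda>x. m / G x \<le> ln (g1 x) / G x) at_top"
      using eventually_ge_at_top[of "t0 + 1"] eventually_G_gt[of 0] by eventually_elim
        (auto simp: m_def g1_pos g1_mono intro!: divide_right_mono)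
    show "eventually (\<lambda>x. ln (g1 x) / G x \<le> ((\<rho> + 1) * ln (G x) + K) / G x) at_top"
      using K eventually_G_gt[of 0] by eventually_elim (auto intro!: divide_right_mono)
  qed
qed

lemma eventually_g1_le_exp_half_G: "eventually (\<lambda>x. g1 x \<le> exp (G x / 2)) at_top"
proof -
  have "eventually (\<lambda>x. ln (g1 x) / G x < 1 / 2) at_top"
    by (rule order_tendstoD(2)[OF ln_g1_over_G_tendsto_0]) simp
  then show ?thesis using eventually_gt_at_top[of t0] eventually_G_gt[of 0]
  proof eventually_elim
    case (elim x)
    then have "ln (g1 x) \<le> G x / 2" by (simp add: field_simps)
    then show ?case using g1_pos[of x] elim by (metis exp_le_cancel_iff exp_ln)
  qed
qed

lemma f_over_g1_at_top: "filterlim (\<lambda>x. f x / g1 x) at_top at_top"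
proof (rule filterlim_at_top_mono)
  have "filterlim (\<lambda>y::real. exp (y / 2)) at_top at_top" by real_asymp
  then show "filterlim (\<lambda>x. exp (G x / 2)) at_top at_top"
    by (rule filterlim_compose[OF _ G_at_top])
  show "eventually (\<lambda>x. exp (G x / 2) \<le> f x / g1 x) at_top"
    using eventually_g1_le_exp_half_G eventually_gt_at_top[of t0]
  proof eventually_elim
    case (elim x)
    have "exp (G x / 2) * g1 x \<le> exp (G x / 2) * exp (G x / 2)"
      using elim by simp
    also have "\<dots> = f x" using elim by (simp add: f_eq_exp flip: exp_add)
    finally show ?case using elim g1_pos[of x] by (simp add: field_simps)
  qed
qed

lemma f_over_g1_le_F: "\<exists>A. eventually (\<lambda>x. f x / g1 x \<le> F x + A) at_top"
proof (rule DERIV_le_imp_eventually_le_add_const)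
  show "eventually (\<lambda>x. ((\<lambda>x. f x / g1 x) has_real_derivative
      (f x * g1 x * g1 x - f x * g2 x) / (g1 x * g1 x)) (at x)) at_top"
    using eventually_gt_at_top[of t0] by eventually_elim (auto intro!: DERIV_divide f_deriv g1_deriv dest: g1_pos)
  show "eventually (\<lambda>x. (F has_real_derivative f x) (at x)) at_top"
    using eventually_gt_at_top[of t0] by eventually_elim (rule F_deriv)
  show "eventually (\<lambda>x. (f x * g1 x * g1 x - f x * g2 x) / (g1 x * g1 x) \<le> f x) at_top"
    using eventually_gt_at_top[of t0] by eventually_elim
      (auto simp: field_simps f_pos g1_pos g2_pos less_imp_le)
qed

lemma eventually_half_f_over_g1_le_F: "eventually (\<lambda>x. f x / (2 * g1 x) \<le> F x) at_top"
proof -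
  obtain A where "eventually (\<lambda>x. f x / g1 x \<le> F x + A) at_top"
    using f_over_g1_le_F by blast
  moreover have "eventually (\<lambda>x. 2 * A \<le> f x / g1 x) at_top"
    using f_over_g1_at_top by (simp add: filterlim_at_top)
  ultimately show ?thesis by eventually_elim simp
qed

lemma F_at_top: "filterlim F at_top at_top"
proof (rule filterlim_at_top_mono[OF _ eventually_half_f_over_g1_le_F])
  show "filterlim (\<lambda>x. f x / (2 * g1 x)) at_top at_top"
    using filterlim_at_top_mult_tendsto_pos[OF tendsto_const[of "1/2"] _ f_over_g1_at_top]
    by (simp add: field_simps)
qed

lemma F_le_x_f: "\<exists>C. eventually (\<lambda>x. F x \<le> x * f x + C) at_top"
proof (rule DERIV_le_imp_eventually_le_add_const)
  show "eventually (\<lambda>x. (F has_real_derivative f x) (at x)) at_top"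
    using eventually_gt_at_top[of t0] by eventually_elim (rule F_deriv)
  show "eventually (\<lambda>x. ((\<lambda>x. x * f x) has_real_derivative f x + x * (f x * g1 x)) (at x)) at_top"
    using eventually_gt_at_top[of t0] by eventually_elim (auto intro!: derivative_eq_intros f_deriv)
  show "eventually (\<lambda>x. f x \<le> f x + x * (f x * g1 x)) at_top"
    using eventually_gt_at_top[of "max t0 0"] by eventually_elim (simp add: f_pos g1_pos less_imp_le)
qed

lemma ln_F_ge: "eventually (\<lambda>x. G x - ln 2 - ln (g1 x) \<le> ln (F x)) at_top"
  using eventually_half_f_over_g1_le_F eventually_gt_at_top[of t0]
proof eventually_elim
  case (elim x)
  have "G x - ln 2 - ln (g1 x) = ln (f x / (2 * g1 x))"
    using elim g1_pos[of x] by (simp add: f_eq_exp ln_div ln_mult)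
  also have "\<dots> \<le> ln (F x)"
    using elim by (intro ln_mono) (simp_all add: f_pos g1_pos)
  finally show ?case .
qed

lemma ln_F_le: "\<exists>K. eventually (\<lambda>x. ln (F x) \<le> G x + ln (G x) + K) at_top"
proof -
  obtain N where N: "N > 0" "eventually (\<lambda>x. x \<le> N * G x) at_top"
    using x_le_G by blast
  obtain C where C: "eventually (\<lambda>x. F x \<le> x * f x + C) at_top"
    using F_le_x_f by blast
  have "eventually (\<lambda>x. \<bar>C\<bar> \<le> f x) at_top"
    using eventually_G_gt[of "ln (\<bar>C\<bar> + 1)"] eventually_gt_at_top[of t0]
  proof eventually_elim
    case (elim x)
    have "exp (ln (\<bar>C\<bar> + 1)) < exp (G x)" using elim by (simp only: exp_less_cancel_iff)
    then show ?case using elim by (simp add: f_eq_exp)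
  qed
  with C N(2) eventually_half_f_over_g1_le_F eventually_gt_at_top[of "max t0 1"] eventually_G_gt[of 0]
  have "eventually (\<lambda>x. ln (F x) \<le> G x + ln (G x) + (ln 2 + ln N)) at_top"
  proof eventually_elim
    case (elim x)
    have "0 < f x / (2 * g1 x)" using elim by (simp add: f_pos g1_pos)
    with elim have F_pos: "F x > 0" by linarith
    have "f x \<le> x * f x" using elim f_pos[of x] by simp
    with elim have "F x \<le> 2 * (x * f x)" by linarith
    then have "ln (F x) \<le> ln (2 * (x * f x))"
      using F_pos by (rule ln_mono)
    also have "\<dots> = ln 2 + ln x + G x"
      using elim by (simp add: ln_mult f_pos f_eq_exp)
    also have "ln x \<le> ln (N * G x)"
      using elim by (intro ln_mono) simp_all
    also have "\<dots> = ln N + ln (G x)"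
      using elim N(1) by (simp add: ln_mult)
    finally show ?case by simp
  qed
  then show ?thesis by blast
qed

lemma ln_F_over_G_tendsto_1: "((\<lambda>x. ln (F x) / G x) \<longlongrightarrow> 1) at_top"
proof -
  obtain K where K: "eventually (\<lambda>x. ln (F x) \<le> G x + ln (G x) + K) at_top"
    using ln_F_le by blast
  have "((\<lambda>x. 1 - ln 2 / G x - ln (g1 x) / G x) \<longlongrightarrow> 1 - 0 - 0) at_top"
    using ln_g1_over_G_tendsto_0 G_at_top
    by (intro tendsto_intros tendsto_divide_0[OF tendsto_const] filterlim_at_top_imp_at_infinity)
  then have lower_tendsto: "((\<lambda>x. 1 - ln 2 / G x - ln (g1 x) / G x) \<longlongrightarrow> 1) at_top"
    by simp
  have "((\<lambda>y. (y + ln y + K) / y) \<longlongrightarrow> 1) at_top"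
    by real_asymp
  then have upper_tendsto: "((\<lambda>x. (G x + ln (G x) + K) / G x) \<longlongrightarrow> 1) at_top"
    by (rule filterlim_compose[OF _ G_at_top])
  have lower: "eventually (\<lambda>x. 1 - ln 2 / G x - ln (g1 x) / G x \<le> ln (F x) / G x) at_top"
    using ln_F_ge eventually_G_gt[of 0]
  proof eventually_elim
    case (elim x)
    then have "(G x - ln 2 - ln (g1 x)) / G x \<le> ln (F x) / G x" by (simp add: divide_right_mono)
    then show ?case using elim by (simp add: diff_divide_distrib)
  qed
  have upper: "eventually (\<lambda>x. ln (F x) / G x \<le> (G x + ln (G x) + K) / G x) at_top"
    using K eventually_G_gt[of 0] by eventually_elim (simp add: divide_right_mono)
  show ?thesis by (rule tendsto_sandwich[OF lower upper lower_tendsto upper_tendsto])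
qed

lemma G_g1_over_f_tendsto_0: "((\<lambda>x. G x * (g1 x + 1) / f x) \<longlongrightarrow> 0) at_top"
proof (rule tendsto_sandwich[of "\<lambda>_. 0" _ _ "\<lambda>x. G x * (exp (G x / 2) + 1) / exp (G x)"])
  show "eventually (\<lambda>x. 0 \<le> G x * (g1 x + 1) / f x) at_top"
    using eventually_gt_at_top[of t0] eventually_G_gt[of 0] by eventually_elim (simp add: f_pos g1_pos less_imp_le)
  show "eventually (\<lambda>x. G x * (g1 x + 1) / f x \<le> G x * (exp (G x / 2) + 1) / exp (G x)) at_top"
    using eventually_g1_le_exp_half_G eventually_gt_at_top[of t0] eventually_G_gt[of 0]
    by eventually_elim (auto simp: f_eq_exp intro!: divide_right_mono mult_left_mono)
  have "((\<lambda>y::real. y * (exp (y / 2) + 1) / exp y) \<longlongrightarrow> 0) at_top" by real_asymp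
  then show "((\<lambda>x. G x * (exp (G x / 2) + 1) / exp (G x)) \<longlongrightarrow> 0) at_top"
    by (rule filterlim_compose[OF _ G_at_top])
qed simp

lemma c_f_over_G_le_F_g1_minus_f:
  assumes "0 \<le> c" "c < \<rho>" and A: "eventually (\<lambda>x. f x / g1 x \<le> F x + A) at_top"
  shows "\<exists>B. eventually (\<lambda>x. c * f x / G x - A * g1 x \<le> (F x * g1 x - f x) + B) at_top"
proof (rule DERIV_le_imp_eventually_le_add_const)
  show "eventually (\<lambda>x. ((\<lambda>x. c * f x / G x - A * g1 x) has_real_derivative
      (c * (f x * g1 x) * G x - c * f x * g1 x) / (G x * G x) - A * g2 x) (at x)) at_top"
    using eventually_gt_at_top[of t0] eventually_G_gt[of 0] by eventually_elim
      (auto intro!: DERIV_diff DERIV_divide DERIV_cmult f_deriv G_deriv g1_deriv)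
  show "eventually (\<lambda>x. ((\<lambda>x. F x * g1 x - f x) has_real_derivative F x * g2 x) (at x)) at_top"
    using eventually_gt_at_top[of t0] by eventually_elim
      (rule DERIV_cong[OF DERIV_diff[OF DERIV_mult[OF F_deriv g1_deriv] f_deriv]], simp_all)
  show "eventually (\<lambda>x. (c * (f x * g1 x) * G x - c * f x * g1 x) / (G x * G x) - A * g2 x
      \<le> F x * g2 x) at_top"
    using A eventually_gt_at_top[of t0] eventually_G_gt[of 0] order_tendstoD(1)[OF ratio_tendsto assms(2)]
  proof eventually_elim
    case (elim x)
    have pos: "f x > 0" "g1 x > 0" "g2 x > 0" using elim by (simp_all add: f_pos g1_pos g2_pos)
    have "(c * (f x * g1 x) * G x - c * f x * g1 x) / (G x * G x) \<le> c * (f x * g1 x / G x)"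
      using elim pos assms(1) by (simp add: field_simps)
    also have "\<dots> \<le> (G x * g2 x / (g1 x)\<^sup>2) * (f x * g1 x / G x)"
      using elim pos by (intro mult_right_mono) simp_all
    also have "\<dots> = f x / g1 x * g2 x"
      using elim pos by (simp add: field_simps power2_eq_square)
    also have "\<dots> \<le> (F x + A) * g2 x"
      using elim pos by (intro mult_right_mono) simp_all
    finally show ?case by (simp add: algebra_simps)
  qed
qed

lemma F_g1_minus_f_ge:
  assumes "0 \<le> c" "c < \<rho>"
  shows "\<exists>M. eventually (\<lambda>x. c * f x / G x - M * (g1 x + 1) \<le> F x * g1 x - f x) at_top"
proof -
  obtain A where "eventually (\<lambda>x. f x / g1 x \<le> F x + A) at_top"
    using f_over_g1_le_F by blast
  then obtain B where B: "eventually (\<lambda>x. c * f x / G x - A * g1 x \<le> (F x * g1 x - f x) + B) at_top"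
    using c_f_over_G_le_F_g1_minus_f assms by blast
  have "eventually (\<lambda>x. c * f x / G x - (\<bar>A\<bar> + \<bar>B\<bar>) * (g1 x + 1) \<le> F x * g1 x - f x) at_top"
    using B eventually_gt_at_top[of t0]
  proof eventually_elim
    case (elim x)
    have "A * g1 x \<le> \<bar>A\<bar> * g1 x" "0 \<le> \<bar>B\<bar> * g1 x"
      using g1_pos[of x] elim by (simp_all add: mult_right_mono)
    then have "A * g1 x + B \<le> (\<bar>A\<bar> + \<bar>B\<bar>) * (g1 x + 1)"
      using abs_ge_self[of B] abs_ge_zero[of A] by (simp add: distrib_left distrib_right)
    then show ?case using elim by linarith
  qed
  then show ?thesis by blast
qed

lemma F_ln_F_over_f_deriv:
  assumes "x > t0" "F x > 0"
  shows "((\<lambda>x. F x * ln (F x) / f x) has_real_derivative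
    1 - ln (F x) * (F x * g1 x - f x) / f x) (at x)"
  using assms f_pos[OF assms(1)]
  by (auto intro!: derivative_eq_intros F_deriv f_deriv simp: field_simps)

lemma deriv_F_ln_F_over_f_le:
  assumes "0 \<le> c" "c < \<rho>"
  shows "\<exists>M. eventually (\<lambda>x. deriv (\<lambda>x. F x * ln (F x) / f x) x
    \<le> 1 - ln (F x) / G x * (c - M * (G x * (g1 x + 1) / f x))) at_top"
proof -
  obtain M where "eventually (\<lambda>x. c * f x / G x - M * (g1 x + 1) \<le> F x * g1 x - f x) at_top"
    using F_g1_minus_f_ge assms by blast
  with eventually_gt_at_top[of t0] eventually_G_gt[of 0] F_at_top[unfolded filterlim_at_top, rule_format, of 1]
  have "eventually (\<lambda>x. deriv (\<lambda>x. F x * ln (F x) / f x) x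
    \<le> 1 - ln (F x) / G x * (c - M * (G x * (g1 x + 1) / f x))) at_top"
  proof eventually_elim
    case (elim x)
    have pos: "f x > 0" "F x > 0" "ln (F x) \<ge> 0" using elim by (simp_all add: f_pos)
    have "(c - M * (G x * (g1 x + 1) / f x)) / G x = (c * f x / G x - M * (g1 x + 1)) / f x"
      using elim pos by (simp add: field_simps)
    also have "\<dots> \<le> (F x * g1 x - f x) / f x"
      using elim pos by (simp add: divide_right_mono)
    finally have "ln (F x) * ((c - M * (G x * (g1 x + 1) / f x)) / G x)
        \<le> ln (F x) * ((F x * g1 x - f x) / f x)"
      using pos by (intro mult_left_mono)
    then show ?case
      using DERIV_imp_deriv[OF F_ln_F_over_f_deriv[of x]] elim pos by simp
  qed
  then show ?thesis by blast
qed

lemma Limsup_deriv_F_ln_F_over_f_le: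
  assumes "\<rho> > 0"
  shows "Limsup at_top (\<lambda>x. ereal (deriv (\<lambda>x. F x * ln (F x) / f x) x)) \<le> ereal (1 - \<rho>)"
proof -
  have bound: "Limsup at_top (\<lambda>x. ereal (deriv (\<lambda>x. F x * ln (F x) / f x) x)) \<le> ereal (1 - c)"
    if c: "0 \<le> c" "c < \<rho>" for c
  proof -
    obtain M where M: "eventually (\<lambda>x. deriv (\<lambda>x. F x * ln (F x) / f x) x
        \<le> 1 - ln (F x) / G x * (c - M * (G x * (g1 x + 1) / f x))) at_top"
      using deriv_F_ln_F_over_f_le[OF c] by blast
    have "((\<lambda>x. 1 - ln (F x) / G x * (c - M * (G x * (g1 x + 1) / f x))) \<longlongrightarrow> 1 - 1 * (c - M * 0)) at_top"
      by (intro tendsto_intros ln_F_over_G_tendsto_1 G_g1_over_f_tendsto_0)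
    then have "Limsup at_top (\<lambda>x. ereal (1 - ln (F x) / G x * (c - M * (G x * (g1 x + 1) / f x))))
        = ereal (1 - c)"
      by (intro lim_imp_Limsup) (simp_all add: tendsto_ereal)
    moreover have "Limsup at_top (\<lambda>x. ereal (deriv (\<lambda>x. F x * ln (F x) / f x) x))
        \<le> Limsup at_top (\<lambda>x. ereal (1 - ln (F x) / G x * (c - M * (G x * (g1 x + 1) / f x))))"
      using M by (intro Limsup_mono) simp
    ultimately show ?thesis by simp
  qed
  show ?thesis
  proof (rule ereal_le_epsilon2)
    fix e :: real assume "0 < e"
    define c where "c = max (\<rho> / 2) (\<rho> - e)"
    have "0 \<le> c" "c < \<rho>" using assms \<open>0 < e\<close> by (auto simp: c_def)
    from bound[OF this]
    show "Limsup at_top (\<lambda>x. ereal (deriv (\<lambda>x. F x * ln (F x) / f x) x)) \<le> ereal (1 - \<rho>) + ereal e"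
      by (rule order_trans) (simp add: c_def)
  qed
qed

lemma elasticity_limit_le:
  assumes elasticity: "((\<lambda>x. x * g1 x / G x) \<longlongrightarrow> r) at_top" and "r > 0"
  shows "r * (1 - \<rho>) \<le> 1"
proof (rule ccontr)
  assume "\<not> r * (1 - \<rho>) \<le> 1"
  define \<kappa> where "\<kappa> = (r * (1 - \<rho>) - 1) / 2"
  have "1 + r * \<rho> < r"
    using \<open>\<not> r * (1 - \<rho>) \<le> 1\<close> by (simp add: algebra_simps)
  then have \<kappa>: "\<kappa> > 0" "1 + r * \<rho> - r < - \<kappa>"
    unfolding \<kappa>_def by (simp_all add: right_diff_distrib field_simps)
  define w where "w x = x * g1 x / G x" for x
  have "((\<lambda>x. 1 + w x * (G x * g2 x / (g1 x)\<^sup>2) - w x) \<longlongrightarrow> 1 + r * \<rho> - r) at_top"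
    unfolding w_def by (intro tendsto_intros elasticity ratio_tendsto)
  then have slope: "eventually (\<lambda>x. 1 + w x * (G x * g2 x / (g1 x)\<^sup>2) - w x < - \<kappa>) at_top"
    using \<kappa>(2) by (rule order_tendstoD(2))
  have "\<exists>C. eventually (\<lambda>x. ln (w x) \<le> - \<kappa> * ln x + C) at_top"
  proof (rule DERIV_le_imp_eventually_le_add_const)
    show "eventually (\<lambda>x. ((\<lambda>x. ln (w x)) has_real_derivative
        (1 + w x * (G x * g2 x / (g1 x)\<^sup>2) - w x) / x) (at x)) at_top"
      using eventually_gt_at_top[of "max t0 0"] eventually_G_gt[of 0]
    proof eventually_elim
      case (elim x)
      then show ?case
        using g1_pos[of x] unfolding w_def
        by (auto intro!: derivative_eq_intros G_deriv g1_deriv simp: field_simps power2_eq_square)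
    qed
    show "eventually (\<lambda>x. ((\<lambda>x. - \<kappa> * ln x) has_real_derivative - \<kappa> / x) (at x)) at_top"
      using eventually_gt_at_top[of 0] by eventually_elim (auto intro!: derivative_eq_intros)
    show "eventually (\<lambda>x. (1 + w x * (G x * g2 x / (g1 x)\<^sup>2) - w x) / x \<le> - \<kappa> / x) at_top"
      using slope eventually_gt_at_top[of 0]
      by eventually_elim (metis divide_right_mono less_eq_real_def)
  qed
  then obtain C where C: "eventually (\<lambda>x. ln (w x) \<le> - \<kappa> * ln x + C) at_top"
    by blast
  have "eventually (\<lambda>x. ln r - 1 < ln (w x)) at_top"
    using tendsto_ln[OF elasticity] \<open>r > 0\<close> unfolding w_def by (intro order_tendstoD(1)) auto
  moreover have "eventually (\<lambda>x::real. - \<kappa> * ln x + C < ln r - 1) at_top"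
    using \<kappa>(1) by real_asymp
  ultimately have "eventually (\<lambda>x. ln (w x) < ln (w x)) at_top"
    using C by eventually_elim simp
  then show False by simp
qed

end

theorem lemma2p12:
  fixes f f1 f2 g1 g2 :: "real \<Rightarrow> real" and t0 q :: real and p :: ereal
  assumes t0: "t0 \<ge> 0"
    and f_nonneg: "\<And>x. x \<ge> 0 \<Longrightarrow> f x \<ge> 0"
    and f_pos: "\<And>x. x \<ge> t0 \<Longrightarrow> f x > 0"
    and f1: "\<And>x. x \<ge> 0 \<Longrightarrow> (f has_real_derivative f1 x) (at x within {0..})"
    and f1_cont: "continuous_on {0..} f1"
    and f2: "\<And>x. x \<ge> t0 \<Longrightarrow> (f1 has_real_derivative f2 x) (at x within {t0..})"
    and f2_cont: "continuous_on {t0..} f2"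
    and g1: "\<And>x. x \<ge> t0 \<Longrightarrow> ((\<lambda>t. ln (f t)) has_real_derivative g1 x) (at x within {t0..})"
    and g2: "\<And>x. x \<ge> t0 \<Longrightarrow> (g1 has_real_derivative g2 x) (at x within {t0..})"
    and H1_pos: "\<And>t. t \<ge> t0 \<Longrightarrow> g1 t > 0 \<and> g2 t > 0"
    and qp: "(q = 1 \<and> 0 < p) \<or> (q > 1 \<and> 0 < p \<and> p < \<infinity>)"
    and lim_q: "((\<lambda>t. (g1 t)\<^sup>2 / (ln (f t) * g2 t)) \<longlongrightarrow> q) at_top"
    and lim_p: "((\<lambda>t. ereal (t * g1 t / ln (f t))) \<longlongrightarrow> p) at_top"
    and H1_ii: "q = 1 \<Longrightarrow>
        (\<forall>x y. t0 \<le> x \<longrightarrow> x \<le> y \<longrightarrow> x * g1 x / ln (f x) \<le> y * g1 y / ln (f y)) \<and>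
        (\<exists>k::nat. k \<ge> 1 \<and> (\<exists>h h1 h2 :: real \<Rightarrow> real.
            (\<forall>x. x \<ge> t0 \<longrightarrow> (h has_real_derivative h1 x) (at x within {t0..})) \<and>
            (\<forall>x. x \<ge> t0 \<longrightarrow> (h1 has_real_derivative h2 x) (at x within {t0..})) \<and>
            continuous_on {t0..} h2 \<and>
            (\<forall>x. x \<ge> t0 \<longrightarrow> f x = exp_iter k (h x)) \<and>
            (\<forall>x y. t0 \<le> x \<longrightarrow> x \<le> y \<longrightarrow> h1 y / h y \<le> h1 x / h x)))"
  shows "Limsup at_top (\<lambda>t. ereal (deriv (\<lambda>s. integral {0..s} f * ln (integral {0..s} f) / f s) t))
           \<le> 1 / p"
proof -
  have q: "q \<ge> 1" using qp by auto
  have "continuous_on {0..} f"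
    by (rule DERIV_continuous_on[of _ _ f1]) (use f1 in auto)
  then have F_deriv: "((\<lambda>s. integral {0..s} f) has_real_derivative f x) (at x)" if "x > t0" for x
    using that t0 by (intro integral_has_real_derivative_Ici) auto
  have ratio: "((\<lambda>x. ln (f x) * g2 x / (g1 x)\<^sup>2) \<longlongrightarrow> 1 / q) at_top"
    using tendsto_inverse[OF lim_q] q by (simp add: inverse_eq_divide)
  interpret log_convex_increasing t0 "1 / q" f "\<lambda>s. integral {0..s} f" "\<lambda>x. ln (f x)" g1 g2
    using f_pos H1_pos ratio F_deriv
    by unfold_locales
      (auto intro: has_real_derivative_at_within_Ici[OF g1] has_real_derivative_at_within_Ici[OF g2])
  have "Limsup at_top (\<lambda>t. ereal (deriv (\<lambda>s. integral {0..s} f * ln (integral {0..s} f) / f s) t))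
      \<le> ereal (1 - 1 / q)"
    using Limsup_deriv_F_ln_F_over_f_le q by simp
  also have "\<dots> \<le> 1 / p"
  proof (cases "q = 1")
    case True
    have "0 \<le> 1 / p" using qp by (cases p) auto
    then show ?thesis using True by (simp add: zero_ereal_def)
  next
    case False
    then obtain r where r: "p = ereal r" "r > 0" "q > 1" using qp by (cases p) auto
    then have "r * (1 - 1 / q) \<le> 1"
      using lim_p by (intro elasticity_limit_le) (simp_all add: lim_ereal)
    then have "1 - 1 / q \<le> 1 / r" using r by (simp add: field_simps)
    moreover have "1 / ereal r = ereal (1 / r)" using r by (simp add: one_ereal_def)
    ultimately show ?thesis using r by simp
  qed
  finally show ?thesis .
qed

end
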